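(* Let $n,p>-1$ be real and $k\in\mathbb{C}$ with $\operatorname{Re}k>-1$. Then $$\int_{0}^{1}\frac{\log^{k+1}(x)\,(x^n-x^p)}{(x^{n+1}-1)(x^{p+1}-1)}\,dx=e^{\frac{i\pi k}{2}}\,\zeta(k+2)\,\Gamma(k+2)\left(\frac{\left(\frac{i}{p+1}\right)^k}{(p+1)^2}-\frac{\left(\frac{i}{n+1}\right)^k}{(n+1)^2}\right).$$
   Context: For $x\in(0,1)$, $\log^{s}(x)=e^{s\log(\log x)}$ with $\log(\log x)=\log|\log x|+i\pi$; all powers are principal, so $\left(\frac{i}{q}\right)^k=e^{i\pi k/2}q^{-k}$ for $q>0$. $\zeta$ is the Riemann zeta function. *)

theory Defs
  imports "HOL-Analysis.Analysis"
begin

text \<open>Riemann zeta function, defined by its Dirichlet series. This agrees with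
  the Riemann zeta function on the half-plane Re s > 1, which is the only region
  where it is used in the statement.\<close>
definition riemann_zeta :: "complex \<Rightarrow> complex" where
  "riemann_zeta s = (\<Sum>m. 1 / (of_nat (Suc m)) powr s)"

end

(*
  For 0 < x < 1 the rational factor is a difference of two geometric series,
    (x^n - x^p) / ((x^(n+1) - 1) (x^(p+1) - 1)) = sum over j >= 1 of (x^(j(n+1)-1) - x^(j(p+1)-1)).
  Each term is a Gamma integral in disguise: on (0,1) the principal branch gives
  log^w x = e^(i pi w) (-log x)^w, and the substitution x = e^(-t/c) turns
  the integral of (-log x)^w x^(c-1) over (0,1) into Gamma(w+1) / c^(w+1).
  Summing over j with w = k + 1 produces zeta(k+2).  Sum and integral may be interchanged
  because the integrals of the absolute values of the terms are O(j^(-(Re k + 2))).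
*)
theory Submission
  imports Defs
begin

lemma powr_of_real_neg:
  fixes y :: real and w :: complex
  assumes "y > 0"
  shows "complex_of_real (- y) powr w = exp (\<i> * of_real pi * w) * complex_of_real y powr w"
proof -
  have "Ln (- complex_of_real y) = Ln (complex_of_real y) + \<i> * of_real pi"
    using assms by (subst Ln_minus) auto
  then show ?thesis
    using assms by (simp add: powr_def exp_add algebra_simps)
qed

lemma of_real_powr_divide:
  fixes a b :: real and w :: complex
  assumes "a > 0" "b > 0"
  shows "complex_of_real (a / b) powr w = complex_of_real a powr w / complex_of_real b powr w"
  using assms by (simp add: powr_def Ln_of_real ln_div exp_diff algebra_simps del: of_real_divide)

lemma neg_ln_powr_exp_substitution:
  fixes c t :: real and w :: complex
  assumes "c > 0" "t > 0"
  shows "complex_of_real (exp (- t / c) / c)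
           * (complex_of_real (- ln (exp (- t / c))) powr w * complex_of_real (exp (- t / c) powr (c - 1)))
         = complex_of_real t powr w / complex_of_real (exp t) / complex_of_real c powr (w + 1)"
proof -
  have "complex_of_real (exp (- t / c) / c)
           * (complex_of_real (- ln (exp (- t / c))) powr w * complex_of_real (exp (- t / c) powr (c - 1)))
         = complex_of_real (exp (- t / c) / c * exp (- t / c) powr (c - 1)) * complex_of_real (t / c) powr w"
    by (simp add: ac_simps)
  also have "exp (- t / c) / c * exp (- t / c) powr (c - 1) = exp (- t) / c"
    using assms by (simp add: powr_def exp_add[symmetric] field_simps)
  also have "complex_of_real (exp (- t) / c) * complex_of_real (t / c) powr w
      = complex_of_real t powr w / complex_of_real (exp t) / (complex_of_real c powr w * complex_of_real c)"
    using assms by (subst of_real_powr_divide) (auto simp: exp_minus field_simps)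
  also have "complex_of_real c powr w * complex_of_real c = complex_of_real c powr (w + 1)"
    using assms by (simp add: powr_add)
  finally show ?thesis .
qed

lemma image_exp_neg_divide_Ioi:
  fixes c :: real
  assumes "c > 0"
  shows "(\<lambda>t. exp (- t / c)) ` {0<..} = {0<..<1}"
proof
  show "(\<lambda>t. exp (- t / c)) ` {0<..} \<subseteq> {0<..<1}"
    using assms by auto
  show "{0<..<1} \<subseteq> (\<lambda>t. exp (- t / c)) ` {0<..}"
  proof
    fix x :: real
    assume x: "x \<in> {0<..<1}"
    then have "x = exp (- (- c * ln x) / c)" and "- c * ln x \<in> {0<..}"
      using assms by (auto simp: mult_pos_neg)
    then show "x \<in> (\<lambda>t. exp (- t / c)) ` {0<..}"
      by (rule image_eqI)
  qed
qed

lemma neg_ln_powr_integral: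
  fixes c :: real and w :: complex
  assumes c: "c > 0" and w: "Re w > -1"
  shows "(\<lambda>x. complex_of_real (- ln x) powr w * complex_of_real (x powr (c - 1)))
           absolutely_integrable_on {0<..<1}"
    and "(LINT x:{0<..<1}|lebesgue. complex_of_real (- ln x) powr w * complex_of_real (x powr (c - 1)))
           = Gamma (w + 1) / complex_of_real c powr (w + 1)"
proof -
  define F where "F x = complex_of_real (- ln x) powr w * complex_of_real (x powr (c - 1))" for x
  define G where "G t = complex_of_real t powr (w + 1 - 1) / complex_of_real (exp t)
                          / complex_of_real c powr (w + 1)" for t
  have Rw: "Re (w + 1) > 0"
    using w by simp
  have G_eq: "G t = \<bar>- exp (- t / c) / c\<bar> *\<^sub>R F (exp (- t / c))" if "t \<in> {0<..}" for t
    using neg_ln_powr_exp_substitution[OF c, of t w] that c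
    by (simp add: G_def F_def scaleR_conv_of_real)
  have der: "((\<lambda>t. exp (- t / c)) has_field_derivative - exp (- t / c) / c) (at t within {0<..})"
    for t
    using c by (auto intro!: derivative_eq_intros)
  have inj: "inj_on (\<lambda>t. exp (- t / c)) {0<..}"
    using c by (auto simp: inj_on_def)
  have "G absolutely_integrable_on {0<..}"
    unfolding G_def by (intro set_integrable_divide absolutely_integrable_Gamma_integral' Rw)
  then have "(\<lambda>t. \<bar>- exp (- t / c) / c\<bar> *\<^sub>R F (exp (- t / c))) absolutely_integrable_on {0<..}"
    by (rule set_integrable_cong[THEN iffD1, rotated -1]) (simp_all add: G_eq)
  moreover have "integral {0<..} (\<lambda>t. \<bar>- exp (- t / c) / c\<bar> *\<^sub>R F (exp (- t / c)))
      = Gamma (w + 1) / complex_of_real c powr (w + 1)"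
  proof -
    have "integral {0<..} G = Gamma (w + 1) / complex_of_real c powr (w + 1)"
      unfolding G_def by (intro integral_unique has_integral_divide Gamma_integral_complex' Rw)
    then show ?thesis
      by (metis (no_types, lifting) G_eq integral_cong)
  qed
  ultimately have "F absolutely_integrable_on (\<lambda>t. exp (- t / c)) ` {0<..}
      \<and> integral ((\<lambda>t. exp (- t / c)) ` {0<..}) F = Gamma (w + 1) / complex_of_real c powr (w + 1)"
    using has_absolute_integral_change_of_variables_real[OF _ der inj, of F] by auto
  then show "F absolutely_integrable_on {0<..<1}"
    and "(LINT x:{0<..<1}|lebesgue. F x) = Gamma (w + 1) / complex_of_real c powr (w + 1)"
    unfolding image_exp_neg_divide_Ioi[OF c] by (simp_all add: set_lebesgue_integral_eq_integral)
qed

lemma neg_ln_powr_integral_real: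
  fixes c r :: real
  assumes c: "c > 0" and r: "r > -1"
  shows "(\<lambda>x. (- ln x) powr r * x powr (c - 1)) absolutely_integrable_on {0<..<1}"
    and "(LINT x:{0<..<1}|lebesgue. (- ln x) powr r * x powr (c - 1)) = Gamma (r + 1) / c powr (r + 1)"
proof -
  have "Re (complex_of_real r) > -1"
    using r by simp
  note complex_version = neg_ln_powr_integral[OF c this]
  have eq: "complex_of_real (- ln x) powr of_real r * complex_of_real (x powr (c - 1))
      = complex_of_real ((- ln x) powr r * x powr (c - 1))" if "x \<in> {0<..<1}" for x
    using that by (subst powr_of_real) auto
  have "(\<lambda>x. complex_of_real ((- ln x) powr r * x powr (c - 1))) absolutely_integrable_on {0<..<1}"
    using complex_version(1) by (rule set_integrable_cong[THEN iffD1, rotated -1]) (simp_all add: eq del: of_real_minus)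
  then show "(\<lambda>x. (- ln x) powr r * x powr (c - 1)) absolutely_integrable_on {0<..<1}"
    unfolding set_integrable_def
    by (subst complex_of_real_integrable_eq[symmetric]) (simp add: scaleR_conv_of_real)
  have "complex_of_real (LINT x:{0<..<1}|lebesgue. (- ln x) powr r * x powr (c - 1))
      = (LINT x:{0<..<1}|lebesgue. complex_of_real (- ln x) powr of_real r * complex_of_real (x powr (c - 1)))"
    unfolding set_integral_complex_of_real[symmetric]
    by (intro set_lebesgue_integral_cong) (simp_all add: eq del: of_real_minus)
  also have "\<dots> = complex_of_real (Gamma (r + 1) / c powr (r + 1))"
    unfolding complex_version(2) using c by (simp flip: Gamma_complex_of_real powr_of_real)
  finally show "(LINT x:{0<..<1}|lebesgue. (- ln x) powr r * x powr (c - 1)) = Gamma (r + 1) / c powr (r + 1)"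
    by (simp only: of_real_eq_iff)
qed

lemma powr_geometric_sums:
  fixes x a :: real
  assumes x: "0 < x" "x < 1" and a: "a > 0"
  shows "(\<lambda>j. x powr (real (Suc j) * a - 1)) sums (x powr (a - 1) / (1 - x powr a))"
proof -
  have "x powr a < 1"
    using powr_less_mono2[OF a _ x(2)] x by simp
  then have "(\<lambda>j. x powr (a - 1) * (x powr a) ^ j) sums (x powr (a - 1) / (1 - x powr a))"
    using sums_mult[OF geometric_sums, of "x powr a" "x powr (a - 1)"] x by simp
  moreover have "x powr (a - 1) * (x powr a) ^ j = x powr (real (Suc j) * a - 1)" for j
    using x by (simp add: powr_power powr_add[symmetric] algebra_simps)
  ultimately show ?thesis
    by simp
qed

lemma powr_quotient_sums:
  fixes x a b :: real
  assumes x: "0 < x" "x < 1" and a: "a > 0" and b: "b > 0"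
  shows "(\<lambda>j. x powr (real (Suc j) * a - 1) - x powr (real (Suc j) * b - 1))
           sums ((x powr (a - 1) - x powr (b - 1)) / ((x powr a - 1) * (x powr b - 1)))"
proof -
  have "x powr a < 1" "x powr b < 1"
    using powr_less_mono2[OF a _ x(2)] powr_less_mono2[OF b _ x(2)] x by simp_all
  moreover have "x powr a = x powr (a - 1) * x" "x powr b = x powr (b - 1) * x"
    using x by (simp_all add: powr_diff)
  ultimately have "x powr (a - 1) / (1 - x powr a) - x powr (b - 1) / (1 - x powr b)
      = (x powr (a - 1) - x powr (b - 1)) / ((x powr a - 1) * (x powr b - 1))"
    by (simp add: field_simps)
  then show ?thesis
    using sums_diff[OF powr_geometric_sums[OF x a] powr_geometric_sums[OF x b]] by simp
qed

lemma ln_powr_diff_integral: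
  fixes c1 c2 :: real and w :: complex
  assumes c1: "c1 > 0" and c2: "c2 > 0" and w: "Re w > -1"
  shows "(\<lambda>x. complex_of_real (ln x) powr w * complex_of_real (x powr (c1 - 1) - x powr (c2 - 1)))
           absolutely_integrable_on {0<..<1}"
    and "(LINT x:{0<..<1}|lebesgue.
            complex_of_real (ln x) powr w * complex_of_real (x powr (c1 - 1) - x powr (c2 - 1)))
         = exp (\<i> * of_real pi * w)
             * (Gamma (w + 1) / complex_of_real c1 powr (w + 1) - Gamma (w + 1) / complex_of_real c2 powr (w + 1))"
proof -
  define F where "F c x = complex_of_real (- ln x) powr w * complex_of_real (x powr (c - 1))" for c x
  have eq: "complex_of_real (ln x) powr w * complex_of_real (x powr (c1 - 1) - x powr (c2 - 1))
      = exp (\<i> * of_real pi * w) * (F c1 x - F c2 x)" if "x \<in> {0<..<1}" for x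
    using that powr_of_real_neg[of "- ln x" w] by (simp add: F_def algebra_simps)
  have "(\<lambda>x. exp (\<i> * of_real pi * w) * (F c1 x - F c2 x)) absolutely_integrable_on {0<..<1}"
    unfolding F_def by (intro set_integrable_mult_right set_integral_diff(1) neg_ln_powr_integral c1 c2 w)
  then show "(\<lambda>x. complex_of_real (ln x) powr w * complex_of_real (x powr (c1 - 1) - x powr (c2 - 1)))
               absolutely_integrable_on {0<..<1}"
    by (rule set_integrable_cong[THEN iffD1, rotated -1]) (simp_all add: eq[symmetric])
  have "(LINT x:{0<..<1}|lebesgue.
            complex_of_real (ln x) powr w * complex_of_real (x powr (c1 - 1) - x powr (c2 - 1)))
      = (LINT x:{0<..<1}|lebesgue. exp (\<i> * of_real pi * w) * (F c1 x - F c2 x))"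
    by (intro set_lebesgue_integral_cong) (simp_all add: eq[symmetric])
  also have "\<dots> = exp (\<i> * of_real pi * w) * ((LINT x:{0<..<1}|lebesgue. F c1 x) - (LINT x:{0<..<1}|lebesgue. F c2 x))"
    unfolding F_def by (simp only: set_integral_mult_right set_integral_diff(2) neg_ln_powr_integral(1) c1 c2 w)
  finally show "(LINT x:{0<..<1}|lebesgue.
            complex_of_real (ln x) powr w * complex_of_real (x powr (c1 - 1) - x powr (c2 - 1)))
         = exp (\<i> * of_real pi * w)
             * (Gamma (w + 1) / complex_of_real c1 powr (w + 1) - Gamma (w + 1) / complex_of_real c2 powr (w + 1))"
    unfolding F_def by (simp only: neg_ln_powr_integral(2) c1 c2 w)
qed

lemma norm_ln_powr_diff_le:
  fixes x c1 c2 :: real and w :: complex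
  assumes "0 < x" "x < 1"
  shows "norm (complex_of_real (ln x) powr w * complex_of_real (x powr (c1 - 1) - x powr (c2 - 1)))
           \<le> norm (exp (\<i> * of_real pi * w)) * ((- ln x) powr Re w * (x powr (c1 - 1) + x powr (c2 - 1)))"
proof -
  have "norm (complex_of_real (ln x) powr w) = norm (exp (\<i> * of_real pi * w)) * (- ln x) powr Re w"
    using assms powr_of_real_neg[of "- ln x" w] by (simp add: norm_mult norm_powr_real_powr)
  moreover have "\<bar>x powr (c1 - 1) - x powr (c2 - 1)\<bar> \<le> x powr (c1 - 1) + x powr (c2 - 1)"
    by (simp add: abs_le_iff add_increasing2)
  ultimately show ?thesis
    by (simp add: norm_mult mult_left_mono flip: of_real_diff)
qed

lemma set_integral_sums:
  fixes f :: "nat \<Rightarrow> 'a \<Rightarrow> 'b::{banach, second_countable_topology}"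
  assumes integrable: "\<And>j. set_integrable M S (f j)"
    and sums: "\<And>x. x \<in> S \<Longrightarrow> (\<lambda>j. f j x) sums g x"
    and summable_norm: "\<And>x. x \<in> S \<Longrightarrow> summable (\<lambda>j. norm (f j x))"
    and summable_integral_norm: "summable (\<lambda>j. LINT x:S|M. norm (f j x))"
  shows "set_integrable M S g"
    and "(\<lambda>j. LINT x:S|M. f j x) sums (LINT x:S|M. g x)"
proof -
  define F where "F j x = indicator S x *\<^sub>R f j x" for j x
  have F_integrable: "integrable M (F j)" for j
    using integrable unfolding set_integrable_def F_def .
  have F_summable_norm: "AE x in M. summable (\<lambda>j. norm (F j x))"
    using summable_norm by (intro AE_I2) (simp add: F_def indicator_def)
  have F_summable_integral_norm: "summable (\<lambda>j. \<integral>x. norm (F j x) \<partial>M)"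
    using summable_integral_norm by (simp add: F_def set_lebesgue_integral_def)
  have F_suminf: "(\<lambda>x. \<Sum>j. F j x) = (\<lambda>x. indicator S x *\<^sub>R g x)"
    using sums by (auto simp: F_def indicator_def sums_iff)
  show "set_integrable M S g"
    using integrable_suminf[OF F_integrable F_summable_norm F_summable_integral_norm]
    unfolding F_suminf set_integrable_def .
  show "(\<lambda>j. LINT x:S|M. f j x) sums (LINT x:S|M. g x)"
    using sums_integral[OF F_integrable F_summable_norm F_summable_integral_norm]
    unfolding F_suminf unfolding set_lebesgue_integral_def F_def .
qed

lemma riemann_zeta_sums:
  assumes "Re s > 1"
  shows "(\<lambda>m. 1 / of_nat (Suc m) powr s) sums riemann_zeta s"
proof -
  have "summable (\<lambda>m. exp (of_real (ln (of_nat m)) * (- s)))"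
    using assms by (intro summable_complex_powr_iff) simp
  then have "summable (\<lambda>m. exp (of_real (ln (of_nat (Suc m))) * (- s)))"
    by (subst summable_Suc_iff)
  moreover have "exp (of_real (ln (of_nat (Suc m))) * (- s)) = 1 / of_nat (Suc m) powr s" for m
    by (simp add: powr_def exp_minus divide_inverse mult.commute del: of_nat_Suc)
  ultimately show ?thesis
    unfolding riemann_zeta_def by (simp add: summable_sums)
qed

lemma set_integral_norm_ln_powr_diff_le:
  fixes c1 c2 :: real and w :: complex
  assumes c: "c1 > 0" "c2 > 0" and w: "Re w > -1"
  shows "(LINT x:{0<..<1}|lebesgue.
            norm (complex_of_real (ln x) powr w * complex_of_real (x powr (c1 - 1) - x powr (c2 - 1))))
         \<le> norm (exp (\<i> * of_real pi * w))
             * (Gamma (Re w + 1) / c1 powr (Re w + 1) + Gamma (Re w + 1) / c2 powr (Re w + 1))"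
proof -
  define E where "E = norm (exp (\<i> * of_real pi * w))"
  have "(LINT x:{0<..<1}|lebesgue.
            norm (complex_of_real (ln x) powr w * complex_of_real (x powr (c1 - 1) - x powr (c2 - 1))))
        \<le> (LINT x:{0<..<1}|lebesgue.
             E * ((- ln x) powr Re w * x powr (c1 - 1)) + E * ((- ln x) powr Re w * x powr (c2 - 1)))"
    using norm_ln_powr_diff_le[of _ w c1 c2] neg_ln_powr_integral_real[OF _ w] c w
    by (intro set_integral_mono set_integrable_norm ln_powr_diff_integral set_integral_add
          set_integrable_mult_right) (simp_all add: E_def distrib_left)
  also have "\<dots> = E * (Gamma (Re w + 1) / c1 powr (Re w + 1) + Gamma (Re w + 1) / c2 powr (Re w + 1))"
    using neg_ln_powr_integral_real[OF _ w] c by (simp add: distrib_left)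
  finally show ?thesis
    unfolding E_def .
qed

lemma summable_set_integral_norm_ln_powr_terms:
  fixes a b :: real and w :: complex
  assumes a: "a > 0" and b: "b > 0" and w: "Re w > 0"
  shows "summable (\<lambda>j. LINT x:{0<..<1}|lebesgue. norm (complex_of_real (ln x) powr w
           * complex_of_real (x powr (real (Suc j) * a - 1) - x powr (real (Suc j) * b - 1))))"
    (is "summable ?I")
proof -
  define K where "K = norm (exp (\<i> * of_real pi * w)) * Gamma (Re w + 1)
                        * (1 / a powr (Re w + 1) + 1 / b powr (Re w + 1))"
  have bound: "?I j \<le> K / real (Suc j) powr (Re w + 1)" for j
  proof -
    have pos: "real (Suc j) * a > 0" "real (Suc j) * b > 0" "Re w > -1"
      using a b w by simp_all
    have split: "(real (Suc j) * c) powr (Re w + 1) = real (Suc j) powr (Re w + 1) * c powr (Re w + 1)"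
      if "c > 0" for c
      using that by (simp add: powr_mult)
    show ?thesis
      using set_integral_norm_ln_powr_diff_le[OF pos] a b unfolding split[OF a] split[OF b]
      by (simp add: K_def field_simps)
  qed
  have "summable (\<lambda>j. real j powr - (Re w + 1))"
    using w by (subst summable_real_powr_iff) simp
  then have "summable (\<lambda>j. K * real (Suc j) powr - (Re w + 1))"
    by (intro summable_mult summable_Suc_iff[THEN iffD2])
  then have "summable (\<lambda>j. K / real (Suc j) powr (Re w + 1))"
    unfolding powr_minus_divide by simp
  then show ?thesis
  proof (rule summable_comparison_test'[where N = 0])
    show "norm (?I j) \<le> K / real (Suc j) powr (Re w + 1)" for j
      using bound[of j] unfolding set_lebesgue_integral_def by simp
  qed
qed

lemma summable_norm_ln_powr_terms:
  fixes x a b :: real and w :: complex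
  assumes x: "0 < x" "x < 1" and a: "a > 0" and b: "b > 0"
  shows "summable (\<lambda>j. norm (complex_of_real (ln x) powr w
           * complex_of_real (x powr (real (Suc j) * a - 1) - x powr (real (Suc j) * b - 1))))"
proof (rule summable_comparison_test'[where N = 0])
  have "(\<lambda>j. x powr (real (Suc j) * a - 1) + x powr (real (Suc j) * b - 1))
      sums (x powr (a - 1) / (1 - x powr a) + x powr (b - 1) / (1 - x powr b))"
    by (intro sums_add powr_geometric_sums x a b)
  then show "summable (\<lambda>j. norm (exp (\<i> * of_real pi * w)) * ((- ln x) powr Re w
      * (x powr (real (Suc j) * a - 1) + x powr (real (Suc j) * b - 1))))"
    by (intro summable_mult sums_summable)
  show "norm (norm (complex_of_real (ln x) powr w
           * complex_of_real (x powr (real (Suc j) * a - 1) - x powr (real (Suc j) * b - 1))))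
      \<le> norm (exp (\<i> * of_real pi * w)) * ((- ln x) powr Re w
           * (x powr (real (Suc j) * a - 1) + x powr (real (Suc j) * b - 1)))" for j
    using norm_ln_powr_diff_le[OF x] by simp
qed

lemma set_integral_ln_powr_terms:
  fixes a b :: real and w :: complex
  assumes a: "a > 0" and b: "b > 0" and w: "Re w > -1"
  shows "(LINT x:{0<..<1}|lebesgue. complex_of_real (ln x) powr w
            * complex_of_real (x powr (real (Suc j) * a - 1) - x powr (real (Suc j) * b - 1)))
         = exp (\<i> * of_real pi * w) * Gamma (w + 1)
             * (1 / complex_of_real a powr (w + 1) - 1 / complex_of_real b powr (w + 1))
             * (1 / of_nat (Suc j) powr (w + 1))"
proof -
  have split: "complex_of_real (real (Suc j) * c) powr (w + 1)
      = of_nat (Suc j) powr (w + 1) * complex_of_real c powr (w + 1)" if "c > 0" for c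
    using that by (subst of_real_mult, subst powr_times_real) auto
  have "of_nat (Suc j) powr (w + 1) \<noteq> (0 :: complex)"
    by (simp add: powr_def del: of_nat_Suc)
  moreover have "(LINT x:{0<..<1}|lebesgue. complex_of_real (ln x) powr w
            * complex_of_real (x powr (real (Suc j) * a - 1) - x powr (real (Suc j) * b - 1)))
      = exp (\<i> * of_real pi * w)
        * (Gamma (w + 1) / complex_of_real (real (Suc j) * a) powr (w + 1)
           - Gamma (w + 1) / complex_of_real (real (Suc j) * b) powr (w + 1))"
    using a b w by (intro ln_powr_diff_integral(2)) simp_all
  ultimately show ?thesis
    using a b by (simp only: split) (simp add: field_simps)
qed

lemma has_integral_ln_powr_quotient:
  fixes a b :: real and w :: complex
  assumes a: "a > 0" and b: "b > 0" and w: "Re w > 0"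
  shows "((\<lambda>x. complex_of_real (ln x) powr w
            * complex_of_real ((x powr (a - 1) - x powr (b - 1)) / ((x powr a - 1) * (x powr b - 1))))
          has_integral exp (\<i> * of_real pi * w) * Gamma (w + 1) * riemann_zeta (w + 1)
             * (1 / complex_of_real a powr (w + 1) - 1 / complex_of_real b powr (w + 1))) {0..1}"
proof -
  define f where "f j x = complex_of_real (ln x) powr w
      * complex_of_real (x powr (real (Suc j) * a - 1) - x powr (real (Suc j) * b - 1))" for j x
  define g where "g = (\<lambda>x. complex_of_real (ln x) powr w
      * complex_of_real ((x powr (a - 1) - x powr (b - 1)) / ((x powr a - 1) * (x powr b - 1))))"
  define C where "C = exp (\<i> * of_real pi * w) * Gamma (w + 1)
      * (1 / complex_of_real a powr (w + 1) - 1 / complex_of_real b powr (w + 1))"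
  have w1: "Re w > -1"
    using w by simp
  have f_integrable: "set_integrable lebesgue {0<..<1} (f j)" for j
    unfolding f_def using a b w1 by (intro ln_powr_diff_integral) simp_all
  have f_sums: "(\<lambda>j. f j x) sums g x" if "x \<in> {0<..<1}" for x
    using powr_quotient_sums[OF _ _ a b, of x] that unfolding f_def g_def
    by (intro sums_mult sums_of_real) simp
  have f_summable_norm: "summable (\<lambda>j. norm (f j x))" if "x \<in> {0<..<1}" for x
    using that unfolding f_def by (intro summable_norm_ln_powr_terms a b) simp_all
  have "summable (\<lambda>j. LINT x:{0<..<1}|lebesgue. norm (f j x))"
    unfolding f_def using a b w by (rule summable_set_integral_norm_ln_powr_terms)
  note interchange = set_integral_sums[OF f_integrable f_sums f_summable_norm this]
  have "(\<lambda>j. LINT x:{0<..<1}|lebesgue. f j x) sums (C * riemann_zeta (w + 1))"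
    unfolding f_def set_integral_ln_powr_terms[OF a b w1] C_def[symmetric]
    using w by (intro sums_mult riemann_zeta_sums) simp
  then have "(LINT x:{0<..<1}|lebesgue. g x) = C * riemann_zeta (w + 1)"
    using interchange(2) by (rule sums_unique2[symmetric])
  then have "(g has_integral C * riemann_zeta (w + 1)) {0..1}"
    using has_integral_set_lebesgue[OF interchange(1)] by (simp add: has_integral_Icc_iff_Ioo)
  then show ?thesis
    unfolding g_def C_def by (simp add: ac_simps)
qed

lemma imaginary_unit_divide_powr:
  fixes \<beta> :: real and k :: complex
  assumes "\<beta> > 0"
  shows "(\<i> / complex_of_real \<beta>) powr k / complex_of_real (\<beta>^2)
           = exp (\<i> * of_real pi * k / 2) / complex_of_real \<beta> powr (k + 2)"
proof -
  have "(\<i> / complex_of_real \<beta>) powr k = complex_of_real (1 / \<beta>) powr k * \<i> powr k"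
    using assms powr_times_real_left[of "complex_of_real (1 / \<beta>)" \<i> k] by (simp add: field_simps)
  also have "\<i> powr k = exp (\<i> * of_real pi * k / 2)"
    by (simp add: powr_def algebra_simps)
  also have "complex_of_real (1 / \<beta>) powr k = 1 / complex_of_real \<beta> powr k"
    using assms of_real_powr_divide[of 1 \<beta> k] by simp
  also have "complex_of_real \<beta> powr (k + 2) = complex_of_real \<beta> powr k * complex_of_real \<beta> ^ 2"
    using assms by (simp add: powr_add)
  ultimately show ?thesis
    using assms by (simp add: field_simps)
qed

theorem mainTheorem18:
  fixes n p :: real and k :: complex
  assumes "n > -1" and "p > -1" and "Re k > -1"
  shows "((\<lambda>x::real. (complex_of_real (ln x)) powr (k + 1)
              * complex_of_real (x powr n - x powr p)
              / complex_of_real ((x powr (n + 1) - 1) * (x powr (p + 1) - 1)))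
          has_integral
           (exp (\<i> * of_real pi * k / 2) * riemann_zeta (k + 2) * Gamma (k + 2)
            * ((\<i> / complex_of_real (p + 1)) powr k / complex_of_real ((p + 1)^2)
               - (\<i> / complex_of_real (n + 1)) powr k / complex_of_real ((n + 1)^2))))
         {0..1}"
proof -
  define z where "z = exp (\<i> * of_real pi * k / 2)"
  have pos: "n + 1 > 0" "p + 1 > 0" "Re (k + 1) > 0"
    using assms by simp_all
  have "exp (\<i> * of_real pi * (k + 1))
      = exp (\<i> * of_real pi * k / 2 + \<i> * of_real pi * k / 2 + \<i> * of_real pi)"
    by (rule arg_cong[where f = exp]) (simp add: field_simps)
  also have "\<dots> = - (z ^ 2)"
    by (simp only: exp_add exp_pi_i' z_def) (simp add: power2_eq_square)
  finally have "exp (\<i> * of_real pi * (k + 1)) = - (z ^ 2)" .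
  then have "z * riemann_zeta (k + 2) * Gamma (k + 2)
        * (z / complex_of_real (p + 1) powr (k + 2) - z / complex_of_real (n + 1) powr (k + 2))
      = exp (\<i> * of_real pi * (k + 1)) * Gamma (k + 1 + 1) * riemann_zeta (k + 1 + 1)
        * (1 / complex_of_real (n + 1) powr (k + 1 + 1) - 1 / complex_of_real (p + 1) powr (k + 1 + 1))"
    by (simp add: divide_inverse algebra_simps power2_eq_square)
  moreover have "(\<lambda>x. complex_of_real (ln x) powr (k + 1) * complex_of_real (x powr n - x powr p)
                   / complex_of_real ((x powr (n + 1) - 1) * (x powr (p + 1) - 1)))
      = (\<lambda>x. complex_of_real (ln x) powr (k + 1) * complex_of_real ((x powr (n + 1 - 1) - x powr (p + 1 - 1))
                   / ((x powr (n + 1) - 1) * (x powr (p + 1) - 1))))"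
    by simp
  ultimately show ?thesis
    unfolding imaginary_unit_divide_powr[OF pos(1)] imaginary_unit_divide_powr[OF pos(2)] z_def[symmetric]
    using has_integral_ln_powr_quotient[OF pos] by simp
qed
end
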